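(* Let $p \geq 7$ be a prime with $p \equiv \pm 3 \pmod 8$, and let $G = \mathrm{PSL}(2,p^2)$. If $m(G) = 3$, then $G$ fails the replacement property.
   Context: For a finite group $G$, a finite sequence $s=(g_1,\dots,g_k)$ of elements of $G$ is an irredundant generating sequence if $\langle g_1,\dots,g_k\rangle = G$ and $g_i \notin \langle g_j : j \neq i\rangle$ for every $i$. $m(G)$ denotes the maximal length of an irredundant generating sequence of $G$. An irredundant generating sequence $s=(g_1,\dots,g_k)$ satisfies the replacement property if for every nontrivial $g \in G$ there is an index $i$ such that $(g_1,\dots,g_{i-1},g,g_{i+1},\dots,g_k)$ generates $G$ (not necessarily irredundantly). $G$ satisfies the replacement property if every irredundant generating sequence of length $m(G)$ satisfies it; $G$ fails the replacement property otherwise. *)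

theory Defs
  imports "HOL-Algebra.Algebra" "HOL-Computational_Algebra.Primes"
begin

definition irredundant_gen_seq :: "('a, 'b) monoid_scheme \<Rightarrow> 'a list \<Rightarrow> bool" where
  "irredundant_gen_seq G s \<longleftrightarrow>
     set s \<subseteq> carrier G \<and>
     generate G (set s) = carrier G \<and>
     (\<forall>i < length s. s ! i \<notin> generate G {s ! j | j. j < length s \<and> j \<noteq> i})"

definition max_irr_len :: "('a, 'b) monoid_scheme \<Rightarrow> nat" where
  "max_irr_len G = (GREATEST k. \<exists>s. irredundant_gen_seq G s \<and> length s = k)"

definition seq_replacement_property :: "('a, 'b) monoid_scheme \<Rightarrow> 'a list \<Rightarrow> bool" where
  "seq_replacement_property G s \<longleftrightarrow>
     (\<forall>g \<in> carrier G. g \<noteq> \<one>\<^bsub>G\<^esub> \<longrightarrow>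
        (\<exists>i < length s. generate G (set (s[i := g])) = carrier G))"

definition replacement_property :: "('a, 'b) monoid_scheme \<Rightarrow> bool" where
  "replacement_property G \<longleftrightarrow>
     (\<forall>s. irredundant_gen_seq G s \<and> length s = max_irr_len G \<longrightarrow> seq_replacement_property G s)"

section \<open>A concrete model of GF(p^2) = F_p(sqrt 2), valid when 2 is a non-square mod p\<close>

type_synonym fe = "int \<times> int"  (* (a,b) represents a + b*sqrt 2 *)

definition fel :: "int \<Rightarrow> fe set" where
  "fel p = {(a, b). 0 \<le> a \<and> a < p \<and> 0 \<le> b \<and> b < p}"

fun fadd :: "int \<Rightarrow> fe \<Rightarrow> fe \<Rightarrow> fe" where
  "fadd p (a, b) (c, d) = ((a + c) mod p, (b + d) mod p)"

fun fmul :: "int \<Rightarrow> fe \<Rightarrow> fe \<Rightarrow> fe" where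
  "fmul p (a, b) (c, d) = ((a * c + 2 * b * d) mod p, (a * d + b * c) mod p)"

fun fneg :: "int \<Rightarrow> fe \<Rightarrow> fe" where
  "fneg p (a, b) = ((- a) mod p, (- b) mod p)"

section \<open>2x2 matrices (a,b,c,d) = [[a,b],[c,d]] over this field, SL(2), PSL(2)\<close>

type_synonym mat2 = "fe \<times> fe \<times> fe \<times> fe"

fun mmul :: "int \<Rightarrow> mat2 \<Rightarrow> mat2 \<Rightarrow> mat2" where
  "mmul p (a, b, c, d) (e, f, g, h) =
     (fadd p (fmul p a e) (fmul p b g), fadd p (fmul p a f) (fmul p b h),
      fadd p (fmul p c e) (fmul p d g), fadd p (fmul p c f) (fmul p d h))"

fun mdet :: "int \<Rightarrow> mat2 \<Rightarrow> fe" where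
  "mdet p (a, b, c, d) = fadd p (fmul p a d) (fneg p (fmul p b c))"

fun mneg :: "int \<Rightarrow> mat2 \<Rightarrow> mat2" where
  "mneg p (a, b, c, d) = (fneg p a, fneg p b, fneg p c, fneg p d)"

definition mid :: mat2 where
  "mid = ((1, 0), (0, 0), (0, 0), (1, 0))"

definition SL2 :: "int \<Rightarrow> mat2 set" where
  "SL2 p = {(a, b, c, d). a \<in> fel p \<and> b \<in> fel p \<and> c \<in> fel p \<and> d \<in> fel p
                          \<and> mdet p (a, b, c, d) = (1, 0)}"

definition psl_mult :: "int \<Rightarrow> mat2 set \<Rightarrow> mat2 set \<Rightarrow> mat2 set" where
  "psl_mult p A B = {mmul p u v | u v. u \<in> A \<and> v \<in> B}"

definition PSL2_sq :: "int \<Rightarrow> mat2 set monoid" where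
  "PSL2_sq p = \<lparr> carrier = {{M, mneg p M} | M. M \<in> SL2 p},
                monoid.mult = psl_mult p,
                monoid.one = {mid, mneg p mid} \<rparr>"

end

theory Submission
  imports Defs "HOL-Number_Theory.Number_Theory"
begin

(* Since p = 3 or 5 (mod 8), 2 is a non-square mod p and F_p(sqrt 2) is the field of order p^2.
   In G = PSL(2,p^2) take x = U(1), y = U(sqrt 2) (upper unitriangular) and w = [[0,1],[-1,0]].
   Conjugating <x, y>, the whole upper unitriangular group, by w gives the lower one, so x, y, w
   generate G. Each of them avoids a proper subgroup containing the other two: x avoids the
   conjugate of PGL(2,p) by diag(sqrt 2, 1), y avoids PSL(2,p), and w avoids the upper triangular
   Borel subgroup. Hence (x, y, w) is irredundant, of maximal length 3 by hypothesis. The element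
   diag(2, 1/2) lies in all three subgroups, so substituting it for any entry of (x, y, w) yields a
   sequence contained in a proper subgroup. *)

lemma two_not_QuadRes_nat:
  fixes q :: nat
  assumes q: "Factorial_Ring.prime q" "q mod 8 = 3 \<or> q mod 8 = 5"
  shows "\<not> QuadRes (int q) 2"
proof -
  have q2: "2 < q" using prime_ge_2_nat[OF q(1)] q(2) by (cases "q = 2") auto
  have "\<not> int q dvd 2" using q2 by (auto dest: zdvd_imp_le)
  then have n2: "[2 \<noteq> 0] (mod int q)" by (simp add: cong_0_iff)
  interpret GAUSS q 2
    by unfold_locales (use q(1) q2 n2 in auto)
  define h where "h = (int q - 1) div 2"
  have C: "C = (\<lambda>x. x * 2) ` A"
  proof -
    have "\<And>x. x \<in> A \<Longrightarrow> (x * 2) mod int q = x * 2"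
      using q2 by (auto simp: A_def)
    then show ?thesis unfolding C_def B_def image_image by (rule image_cong[OF refl])
  qed
  have E: "E = (\<lambda>x. x * 2) ` {h div 2 <.. h}"
  proof -
    have "E = (\<lambda>x. x * 2) ` {x \<in> A. h < x * 2}"
      unfolding E_def C h_def by auto
    also have "{x \<in> A. h < x * 2} = {h div 2 <.. h}"
      unfolding A_def h_def by (auto; presburger)
    finally show ?thesis .
  qed
  have card_E: "card E = nat (h - h div 2)"
    unfolding E by (subst card_image) (auto simp: inj_on_def)
  have "int q = 8 * int (q div 8) + 3 \<or> int q = 8 * int (q div 8) + 5"
    using q(2) by presburger
  then have "odd (h - h div 2)" unfolding h_def by presburger
  moreover have "h - h div 2 \<ge> 0" unfolding h_def by auto
  ultimately have "odd (card E)" unfolding card_E by (simp add: even_nat_iff)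
  then have "Legendre 2 (int q) = -1" using gauss_lemma by simp
  then show ?thesis unfolding Legendre_def by (auto split: if_splits)
qed

lemma two_not_QuadRes:
  fixes p :: int
  assumes "Factorial_Ring.prime p" "p mod 8 = 3 \<or> p mod 8 = 5"
  shows "\<not> QuadRes p 2"
proof -
  have p0: "p \<ge> 0" using assms(1) by (simp add: prime_ge_0_int)
  have "nat p mod 8 = 3 \<or> nat p mod 8 = 5"
    using assms(2) p0 by (metis nat_mod_distrib nat_numeral zero_le_numeral nat_one_as_int)
  then show ?thesis using two_not_QuadRes_nat[of "nat p"] assms(1) p0 by simp
qed

lemma norm_sqrt2_not_dvd:
  fixes p a b :: int
  assumes p: "Factorial_Ring.prime p" "\<not> QuadRes p 2" and ab: "\<not> (p dvd a \<and> p dvd b)"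
  shows "\<not> p dvd a * a - 2 * b * b"
proof
  assume d: "p dvd a * a - 2 * b * b"
  show False
  proof (cases "p dvd b")
    case True
    then have "p dvd 2 * b * b" by simp
    then have "p dvd (a * a - 2 * b * b) + 2 * b * b" using d by (rule dvd_add[rotated])
    then have "p dvd a * a" by simp
    then show False using ab True p(1) by (simp add: prime_dvd_mult_iff)
  next
    case False
    then have "coprime b p" using prime_imp_coprime[OF p(1)] by (simp add: coprime_commute)
    then obtain b' where b': "[b * b' = 1] (mod p)" using cong_solve_coprime_int by blast
    have "[a * a = 2 * b * b] (mod p)" using d by (simp add: cong_iff_dvd_diff)
    then have "[(a * a) * (b' * b') = (2 * b * b) * (b' * b')] (mod p)" by (rule cong_mult) simp
    then have "[(a * b') ^ 2 = 2 * (b * b') * (b * b')] (mod p)"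
      by (simp add: power2_eq_square ac_simps)
    also have "[2 * (b * b') * (b * b') = 2 * 1 * 1] (mod p)" by (intro cong_mult cong_refl b')
    finally show False using p(2) unfolding QuadRes_def by auto
  qed
qed

section \<open>Sequences separated by subgroups\<close>

lemma set_list_update_subset_others:
  "set (s[i := g]) \<subseteq> insert g {s ! j |j. j < length s \<and> j \<noteq> i}"
proof
  fix x assume "x \<in> set (s[i := g])"
  then obtain k where "k < length s" "x = s[i := g] ! k" by (auto simp: in_set_conv_nth)
  then show "x \<in> insert g {s ! j |j. j < length s \<and> j \<noteq> i}"
    by (cases "k = i") auto
qed

lemma (in group) irredundant_gen_seq_if_separated:
  assumes "set s \<subseteq> carrier G" "generate G (set s) = carrier G"
    and "\<And>i. i < length s \<Longrightarrow> subgroup (K i) G"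
    and "\<And>i. i < length s \<Longrightarrow> s ! i \<notin> K i"
    and "\<And>i. i < length s \<Longrightarrow> {s ! j |j. j < length s \<and> j \<noteq> i} \<subseteq> K i"
  shows "irredundant_gen_seq G s"
proof -
  have "s ! i \<notin> generate G {s ! j |j. j < length s \<and> j \<noteq> i}" if "i < length s" for i
    using generate_subgroup_incl[OF assms(5,3)] assms(4) that by blast
  then show ?thesis using assms(1,2) unfolding irredundant_gen_seq_def by blast
qed

lemma (in group) not_seq_replacement_property_if_separated:
  assumes "set s \<subseteq> carrier G" "g \<in> carrier G" "g \<noteq> \<one>"
    and "\<And>i. i < length s \<Longrightarrow> subgroup (K i) G"
    and "\<And>i. i < length s \<Longrightarrow> s ! i \<notin> K i"
    and "\<And>i. i < length s \<Longrightarrow> {s ! j |j. j < length s \<and> j \<noteq> i} \<subseteq> K i"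
    and "\<And>i. i < length s \<Longrightarrow> g \<in> K i"
  shows "\<not> seq_replacement_property G s"
proof -
  have "generate G (set (s[i := g])) \<noteq> carrier G" if i: "i < length s" for i
  proof -
    have "set (s[i := g]) \<subseteq> K i"
      using set_list_update_subset_others[of s i g] assms(6,7)[OF i] by blast
    then have "generate G (set (s[i := g])) \<subseteq> K i"
      using generate_subgroup_incl assms(4)[OF i] by blast
    moreover have "s ! i \<in> carrier G" using assms(1) i by auto
    ultimately show ?thesis using assms(5)[OF i] by blast
  qed
  then show ?thesis using assms(2,3) unfolding seq_replacement_property_def by blast
qed

lemma (in group) separated_gen_seq_fails_replacement:
  assumes "set s \<subseteq> carrier G" "generate G (set s) = carrier G" "length s = max_irr_len G"
    and "g \<in> carrier G" "g \<noteq> \<one>"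
    and "\<And>i. i < length s \<Longrightarrow> subgroup (K i) G"
    and "\<And>i. i < length s \<Longrightarrow> s ! i \<notin> K i"
    and "\<And>i. i < length s \<Longrightarrow> {s ! j |j. j < length s \<and> j \<noteq> i} \<subseteq> K i"
    and "\<And>i. i < length s \<Longrightarrow> g \<in> K i"
  shows "\<not> replacement_property G"
proof -
  have "irredundant_gen_seq G s"
    using irredundant_gen_seq_if_separated[OF assms(1,2,6,7,8)] by blast
  moreover have "\<not> seq_replacement_property G s"
    using not_seq_replacement_property_if_separated[OF assms(1,4-9)] by blast
  ultimately show ?thesis using assms(3) unfolding replacement_property_def by blast
qed

section \<open>The ring \<open>\<int>/p[\<surd>2]\<close>\<close>

definition sqrt2_ring :: "int \<Rightarrow> fe ring" where
  "sqrt2_ring p = \<lparr>carrier = fel p, monoid.mult = fmul p, one = (1, 0),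
                   ring.zero = (0, 0), ring.add = fadd p\<rparr>"

lemma sqrt2_ring_simps:
  "carrier (sqrt2_ring p) = fel p" "monoid.mult (sqrt2_ring p) = fmul p"
  "one (sqrt2_ring p) = (1, 0)" "ring.zero (sqrt2_ring p) = (0, 0)" "ring.add (sqrt2_ring p) = fadd p"
  by (simp_all add: sqrt2_ring_def)

lemma fmul_mod_right: "fmul p x (c mod p, d mod p) = fmul p x (c, d)"
proof (cases x)
  case (Pair a b)
  have "[a * (c mod p) + 2 * b * (d mod p) = a * c + 2 * b * d] (mod p)"
    "[a * (d mod p) + b * (c mod p) = a * d + b * c] (mod p)"
    by (intro cong_add cong_mult cong_refl; simp add: cong_def)+
  then show ?thesis using Pair by (simp add: cong_def)
qed

locale sqrt2_residues = residues p for p :: int +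
  assumes p_gt_2: "p > 2"
begin

abbreviation E where "E \<equiv> sqrt2_ring p"

lemma fmul_residues: "fmul p (a, b) (c, d) = (a \<otimes> c \<oplus> (2::int) \<otimes> (b \<otimes> d), a \<otimes> d \<oplus> b \<otimes> c)"
  by (simp add: res_add_eq res_mult_eq mod_simps algebra_simps)

lemma fadd_residues: "fadd p (a, b) (c, d) = (a \<oplus> c, b \<oplus> d)"
  by (simp add: res_add_eq)

lemma two_in_carrier: "(2::int) \<in> carrier R"
  using p_gt_2 by (simp add: res_carrier_eq)

lemma fel_residues: "fel p = carrier R \<times> carrier R"
  by (auto simp: fel_def res_carrier_eq)

lemmas residues_simps =
  fmul_residues fadd_residues fel_residues mem_Times_iff fst_conv snd_conv prod.inject

lemma cring_sqrt2_ring: "cring E"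
proof (rule cringI)
  show "abelian_group E"
  proof (rule abelian_groupI)
    fix x y z assume xyz: "x \<in> carrier E" "y \<in> carrier E" "z \<in> carrier E"
    show "x \<oplus>\<^bsub>E\<^esub> y \<in> carrier E" using xyz
      by (cases x; cases y) (simp add: sqrt2_ring_simps residues_simps)
    show "x \<oplus>\<^bsub>E\<^esub> y \<oplus>\<^bsub>E\<^esub> z = x \<oplus>\<^bsub>E\<^esub> (y \<oplus>\<^bsub>E\<^esub> z)"
      by (cases x; cases y; cases z) (simp add: sqrt2_ring_simps mod_simps ac_simps)
    show "x \<oplus>\<^bsub>E\<^esub> y = y \<oplus>\<^bsub>E\<^esub> x"
      by (cases x; cases y) (simp add: sqrt2_ring_simps ac_simps)
    show "\<zero>\<^bsub>E\<^esub> \<oplus>\<^bsub>E\<^esub> x = x" using xyz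
      by (cases x) (simp add: sqrt2_ring_simps fel_def)
    show "\<exists>y\<in>carrier E. y \<oplus>\<^bsub>E\<^esub> x = \<zero>\<^bsub>E\<^esub>"
      by (cases x) (rule bexI[of _ "fneg p x"], use p_gt_2 in \<open>auto simp: sqrt2_ring_simps fel_def mod_simps\<close>)
  next
    show "\<zero>\<^bsub>E\<^esub> \<in> carrier E" using p_gt_2 by (simp add: sqrt2_ring_simps fel_def)
  qed
  show "comm_monoid E"
  proof (rule comm_monoidI)
    fix x y z assume xyz: "x \<in> carrier E" "y \<in> carrier E" "z \<in> carrier E"
    show "x \<otimes>\<^bsub>E\<^esub> y \<in> carrier E" using xyz two_in_carrier
      by (cases x; cases y) (simp add: sqrt2_ring_simps residues_simps)
    show "x \<otimes>\<^bsub>E\<^esub> y \<otimes>\<^bsub>E\<^esub> z = x \<otimes>\<^bsub>E\<^esub> (y \<otimes>\<^bsub>E\<^esub> z)" using xyz two_in_carrier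
      by (cases x; cases y; cases z) (simp only: sqrt2_ring_simps residues_simps, safe; algebra)
    show "x \<otimes>\<^bsub>E\<^esub> y = y \<otimes>\<^bsub>E\<^esub> x" using xyz two_in_carrier
      by (cases x; cases y) (simp only: sqrt2_ring_simps residues_simps, safe; algebra)
    show "\<one>\<^bsub>E\<^esub> \<otimes>\<^bsub>E\<^esub> x = x" using xyz
      by (cases x) (simp add: sqrt2_ring_simps fel_def)
  next
    show "\<one>\<^bsub>E\<^esub> \<in> carrier E" using p_gt_2 by (simp add: sqrt2_ring_simps fel_def)
  qed
  fix x y z assume xyz: "x \<in> carrier E" "y \<in> carrier E" "z \<in> carrier E"
  show "(x \<oplus>\<^bsub>E\<^esub> y) \<otimes>\<^bsub>E\<^esub> z = x \<otimes>\<^bsub>E\<^esub> z \<oplus>\<^bsub>E\<^esub> y \<otimes>\<^bsub>E\<^esub> z" using xyz two_in_carrier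
    by (cases x; cases y; cases z) (simp only: sqrt2_ring_simps residues_simps, safe; algebra)
qed

sublocale E: cring E by (rule cring_sqrt2_ring)

lemma sqrt2_ring_ops:
  "fmul p x y = x \<otimes>\<^bsub>E\<^esub> y" "fadd p x y = x \<oplus>\<^bsub>E\<^esub> y"
  "((1::int), (0::int)) = \<one>\<^bsub>E\<^esub>" "((0::int), (0::int)) = \<zero>\<^bsub>E\<^esub>" "fel p = carrier E"
  by (simp_all add: sqrt2_ring_simps)

lemma fneg_eq_minus: assumes "x \<in> carrier E" shows "fneg p x = \<ominus>\<^bsub>E\<^esub> x"
proof -
  have "fneg p x \<in> carrier E" using p_gt_2 by (cases x) (simp add: sqrt2_ring_simps fel_def)
  moreover have "fneg p x \<oplus>\<^bsub>E\<^esub> x = \<zero>\<^bsub>E\<^esub>"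
    using assms p_gt_2 by (cases x) (simp add: sqrt2_ring_simps fel_def mod_simps)
  ultimately show ?thesis using assms by (simp add: E.minus_equality)
qed

lemma SL2_iff:
  "(a, b, c, d) \<in> SL2 p \<longleftrightarrow> a \<in> carrier E \<and> b \<in> carrier E \<and> c \<in> carrier E \<and> d \<in> carrier E
     \<and> a \<otimes>\<^bsub>E\<^esub> d \<ominus>\<^bsub>E\<^esub> b \<otimes>\<^bsub>E\<^esub> c = \<one>\<^bsub>E\<^esub>"
proof -
  have "b \<otimes>\<^bsub>E\<^esub> c \<in> carrier E" if "b \<in> carrier E" "c \<in> carrier E" using that by simp
  then show ?thesis by (auto simp: SL2_def sqrt2_ring_ops fneg_eq_minus E.minus_eq)
qed

lemma SL2E:
  assumes "M \<in> SL2 p"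
  obtains a b c d where "M = (a, b, c, d)"
    "a \<in> carrier E" "b \<in> carrier E" "c \<in> carrier E" "d \<in> carrier E"
    "a \<otimes>\<^bsub>E\<^esub> d \<ominus>\<^bsub>E\<^esub> b \<otimes>\<^bsub>E\<^esub> c = \<one>\<^bsub>E\<^esub>"
  using assms by (cases M) (auto simp: SL2_iff)

lemma mmul_eq: "mmul p (a, b, c, d) (e, f, g, h) =
  (a \<otimes>\<^bsub>E\<^esub> e \<oplus>\<^bsub>E\<^esub> b \<otimes>\<^bsub>E\<^esub> g, a \<otimes>\<^bsub>E\<^esub> f \<oplus>\<^bsub>E\<^esub> b \<otimes>\<^bsub>E\<^esub> h,
   c \<otimes>\<^bsub>E\<^esub> e \<oplus>\<^bsub>E\<^esub> d \<otimes>\<^bsub>E\<^esub> g, c \<otimes>\<^bsub>E\<^esub> f \<oplus>\<^bsub>E\<^esub> d \<otimes>\<^bsub>E\<^esub> h)"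
  by (simp add: sqrt2_ring_ops)

lemma mneg_eq:
  "a \<in> carrier E \<Longrightarrow> b \<in> carrier E \<Longrightarrow> c \<in> carrier E \<Longrightarrow> d \<in> carrier E \<Longrightarrow>
   mneg p (a, b, c, d) = (\<ominus>\<^bsub>E\<^esub> a, \<ominus>\<^bsub>E\<^esub> b, \<ominus>\<^bsub>E\<^esub> c, \<ominus>\<^bsub>E\<^esub> d)"
  by (simp add: fneg_eq_minus)

lemma mid_eq: "mid = (\<one>\<^bsub>E\<^esub>, \<zero>\<^bsub>E\<^esub>, \<zero>\<^bsub>E\<^esub>, \<one>\<^bsub>E\<^esub>)"
  by (simp add: mid_def sqrt2_ring_simps)

declare mmul.simps [simp del] mneg.simps [simp del]

lemma mmul_SL2: assumes "A \<in> SL2 p" "B \<in> SL2 p" shows "mmul p A B \<in> SL2 p"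
  using assms(1)
proof (rule SL2E)
  fix a b c d assume A: "A = (a, b, c, d)" "a \<in> carrier E" "b \<in> carrier E" "c \<in> carrier E"
    "d \<in> carrier E" "a \<otimes>\<^bsub>E\<^esub> d \<ominus>\<^bsub>E\<^esub> b \<otimes>\<^bsub>E\<^esub> c = \<one>\<^bsub>E\<^esub>"
  from assms(2) show ?thesis
  proof (rule SL2E)
    fix e f g h assume B: "B = (e, f, g, h)" "e \<in> carrier E" "f \<in> carrier E" "g \<in> carrier E"
      "h \<in> carrier E" "e \<otimes>\<^bsub>E\<^esub> h \<ominus>\<^bsub>E\<^esub> f \<otimes>\<^bsub>E\<^esub> g = \<one>\<^bsub>E\<^esub>"
    have "(a \<otimes>\<^bsub>E\<^esub> e \<oplus>\<^bsub>E\<^esub> b \<otimes>\<^bsub>E\<^esub> g) \<otimes>\<^bsub>E\<^esub> (c \<otimes>\<^bsub>E\<^esub> f \<oplus>\<^bsub>E\<^esub> d \<otimes>\<^bsub>E\<^esub> h)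
       \<ominus>\<^bsub>E\<^esub> (a \<otimes>\<^bsub>E\<^esub> f \<oplus>\<^bsub>E\<^esub> b \<otimes>\<^bsub>E\<^esub> h) \<otimes>\<^bsub>E\<^esub> (c \<otimes>\<^bsub>E\<^esub> e \<oplus>\<^bsub>E\<^esub> d \<otimes>\<^bsub>E\<^esub> g)
       = (a \<otimes>\<^bsub>E\<^esub> d \<ominus>\<^bsub>E\<^esub> b \<otimes>\<^bsub>E\<^esub> c) \<otimes>\<^bsub>E\<^esub> (e \<otimes>\<^bsub>E\<^esub> h \<ominus>\<^bsub>E\<^esub> f \<otimes>\<^bsub>E\<^esub> g)"
      using A(2-5) B(2-5) by algebra
    also have "\<dots> = \<one>\<^bsub>E\<^esub>" unfolding A(6) B(6) by simp
    finally show ?thesis unfolding A(1) B(1) mmul_eq SL2_iff using A(2-5) B(2-5) by auto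
  qed
qed

lemma mmul_assoc:
  assumes "A \<in> SL2 p" "B \<in> SL2 p" "C \<in> SL2 p"
  shows "mmul p (mmul p A B) C = mmul p A (mmul p B C)"
  using assms by (elim SL2E) (simp only: mmul_eq prod.inject, safe; algebra)

lemma mid_SL2: "mid \<in> SL2 p"
  unfolding mid_eq SL2_iff by (simp add: E.minus_eq)

lemma mmul_mid_left: "M \<in> SL2 p \<Longrightarrow> mmul p mid M = M"
  by (erule SL2E) (simp add: mid_eq mmul_eq)

lemma mneg_SL2: "M \<in> SL2 p \<Longrightarrow> mneg p M \<in> SL2 p"
  by (erule SL2E) (simp add: mneg_eq SL2_iff E.minus_eq E.l_minus E.r_minus)

lemma mneg_mneg: "M \<in> SL2 p \<Longrightarrow> mneg p (mneg p M) = M"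
  by (erule SL2E) (simp add: mneg_eq)

lemma mmul_mneg_left: "A \<in> SL2 p \<Longrightarrow> B \<in> SL2 p \<Longrightarrow> mmul p (mneg p A) B = mneg p (mmul p A B)"
  by (elim SL2E) (simp add: mneg_eq mmul_eq, safe; algebra)

lemma mmul_mneg_right: "A \<in> SL2 p \<Longrightarrow> B \<in> SL2 p \<Longrightarrow> mmul p A (mneg p B) = mneg p (mmul p A B)"
  by (elim SL2E) (simp add: mneg_eq mmul_eq, safe; algebra)

fun madj :: "mat2 \<Rightarrow> mat2" where
  "madj (a, b, c, d) = (d, fneg p b, fneg p c, a)"

lemma madj_eq:
  "b \<in> carrier E \<Longrightarrow> c \<in> carrier E \<Longrightarrow> madj (a, b, c, d) = (d, \<ominus>\<^bsub>E\<^esub> b, \<ominus>\<^bsub>E\<^esub> c, a)"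
  by (simp add: fneg_eq_minus)

lemma madj_SL2: "M \<in> SL2 p \<Longrightarrow> madj M \<in> SL2 p"
proof (erule SL2E)
  fix a b c d assume M: "M = (a, b, c, d)" "a \<in> carrier E" "b \<in> carrier E" "c \<in> carrier E"
    "d \<in> carrier E" "a \<otimes>\<^bsub>E\<^esub> d \<ominus>\<^bsub>E\<^esub> b \<otimes>\<^bsub>E\<^esub> c = \<one>\<^bsub>E\<^esub>"
  have "d \<otimes>\<^bsub>E\<^esub> a \<ominus>\<^bsub>E\<^esub> (\<ominus>\<^bsub>E\<^esub> b) \<otimes>\<^bsub>E\<^esub> (\<ominus>\<^bsub>E\<^esub> c) = a \<otimes>\<^bsub>E\<^esub> d \<ominus>\<^bsub>E\<^esub> b \<otimes>\<^bsub>E\<^esub> c"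
    using M by algebra
  then show "madj M \<in> SL2 p" using M by (simp add: SL2_iff madj_eq del: madj.simps)
qed

lemma mmul_madj_left: "M \<in> SL2 p \<Longrightarrow> mmul p (madj M) M = mid"
proof (erule SL2E)
  fix a b c d assume M: "M = (a, b, c, d)" "a \<in> carrier E" "b \<in> carrier E" "c \<in> carrier E"
    "d \<in> carrier E" "a \<otimes>\<^bsub>E\<^esub> d \<ominus>\<^bsub>E\<^esub> b \<otimes>\<^bsub>E\<^esub> c = \<one>\<^bsub>E\<^esub>"
  have "d \<otimes>\<^bsub>E\<^esub> a \<oplus>\<^bsub>E\<^esub> (\<ominus>\<^bsub>E\<^esub> b) \<otimes>\<^bsub>E\<^esub> c = a \<otimes>\<^bsub>E\<^esub> d \<ominus>\<^bsub>E\<^esub> b \<otimes>\<^bsub>E\<^esub> c"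
    "(\<ominus>\<^bsub>E\<^esub> c) \<otimes>\<^bsub>E\<^esub> b \<oplus>\<^bsub>E\<^esub> a \<otimes>\<^bsub>E\<^esub> d = a \<otimes>\<^bsub>E\<^esub> d \<ominus>\<^bsub>E\<^esub> b \<otimes>\<^bsub>E\<^esub> c"
    "d \<otimes>\<^bsub>E\<^esub> b \<oplus>\<^bsub>E\<^esub> (\<ominus>\<^bsub>E\<^esub> b) \<otimes>\<^bsub>E\<^esub> d = \<zero>\<^bsub>E\<^esub>"
    "(\<ominus>\<^bsub>E\<^esub> c) \<otimes>\<^bsub>E\<^esub> a \<oplus>\<^bsub>E\<^esub> a \<otimes>\<^bsub>E\<^esub> c = \<zero>\<^bsub>E\<^esub>"
    using M by algebra+
  then show "mmul p (madj M) M = mid" using M by (simp add: madj_eq mmul_eq mid_eq del: madj.simps)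
qed

definition proj :: "mat2 \<Rightarrow> mat2 set" where
  "proj M = {M, mneg p M}"

abbreviation PSL where "PSL \<equiv> PSL2_sq p"

lemma carrier_PSL: "carrier PSL = proj ` SL2 p"
  unfolding PSL2_sq_def proj_def image_def by (simp only: partial_object.simps) blast

lemma one_PSL: "\<one>\<^bsub>PSL\<^esub> = proj mid"
  by (simp add: PSL2_sq_def proj_def)

lemma mult_PSL:
  assumes "A \<in> SL2 p" "B \<in> SL2 p"
  shows "proj A \<otimes>\<^bsub>PSL\<^esub> proj B = proj (mmul p A B)"
proof -
  have "{mmul p u v |u v. u \<in> {A, mneg p A} \<and> v \<in> {B, mneg p B}} =
     {mmul p A B, mmul p A (mneg p B), mmul p (mneg p A) B, mmul p (mneg p A) (mneg p B)}"
    by blast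
  also have "\<dots> = {mmul p A B, mneg p (mmul p A B)}"
    using assms
    by (simp add: mmul_mneg_left mmul_mneg_right mneg_mneg mmul_SL2 mneg_SL2 insert_commute)
  finally show ?thesis by (simp add: PSL2_sq_def proj_def psl_mult_def)
qed

lemma proj_eqD: "proj A = proj M \<Longrightarrow> A = M \<or> A = mneg p M"
  unfolding proj_def by blast

lemma group_PSL: "group PSL"
proof (rule groupI)
  fix x y z assume "x \<in> carrier PSL" "y \<in> carrier PSL" "z \<in> carrier PSL"
  then obtain A B C where ABC: "A \<in> SL2 p" "B \<in> SL2 p" "C \<in> SL2 p" "x = proj A" "y = proj B" "z = proj C"
    unfolding carrier_PSL by blast
  show "x \<otimes>\<^bsub>PSL\<^esub> y \<in> carrier PSL" using ABC by (simp add: mult_PSL carrier_PSL mmul_SL2)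
  show "x \<otimes>\<^bsub>PSL\<^esub> y \<otimes>\<^bsub>PSL\<^esub> z = x \<otimes>\<^bsub>PSL\<^esub> (y \<otimes>\<^bsub>PSL\<^esub> z)"
    using ABC by (simp add: mult_PSL mmul_SL2 mmul_assoc)
  show "\<one>\<^bsub>PSL\<^esub> \<otimes>\<^bsub>PSL\<^esub> x = x" using ABC by (simp add: one_PSL mult_PSL mid_SL2 mmul_mid_left)
  show "\<exists>y\<in>carrier PSL. y \<otimes>\<^bsub>PSL\<^esub> x = \<one>\<^bsub>PSL\<^esub>"
    using ABC by (intro bexI[of _ "proj (madj A)"])
      (simp_all add: one_PSL mult_PSL madj_SL2 mmul_madj_left carrier_PSL)
next
  show "\<one>\<^bsub>PSL\<^esub> \<in> carrier PSL" by (simp add: one_PSL carrier_PSL mid_SL2)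
qed

sublocale PSL: group PSL by (rule group_PSL)

lemma inv_PSL: "A \<in> SL2 p \<Longrightarrow> inv\<^bsub>PSL\<^esub> (proj A) = proj (madj A)"
  by (rule PSL.inv_equality) (simp_all add: one_PSL mult_PSL madj_SL2 mmul_madj_left carrier_PSL)

definition PSL_pred :: "(mat2 \<Rightarrow> bool) \<Rightarrow> mat2 set set" where
  "PSL_pred P = proj ` {M \<in> SL2 p. P M}"

lemma subgroup_PSL_pred:
  assumes "P mid"
    and "\<And>A B. A \<in> SL2 p \<Longrightarrow> B \<in> SL2 p \<Longrightarrow> P A \<Longrightarrow> P B \<Longrightarrow> P (mmul p A B)"
    and "\<And>A. A \<in> SL2 p \<Longrightarrow> P A \<Longrightarrow> P (madj A)"
  shows "subgroup (PSL_pred P) PSL"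
proof (rule PSL.subgroupI)
  show "PSL_pred P \<subseteq> carrier PSL" by (auto simp: PSL_pred_def carrier_PSL)
  show "PSL_pred P \<noteq> {}" using assms(1) mid_SL2 unfolding PSL_pred_def by blast
  fix x y assume "x \<in> PSL_pred P" "y \<in> PSL_pred P"
  then obtain A B where AB: "A \<in> SL2 p" "P A" "x = proj A" "B \<in> SL2 p" "P B" "y = proj B"
    unfolding PSL_pred_def by blast
  have "madj A \<in> {M \<in> SL2 p. P M}" using AB assms(3) madj_SL2 by blast
  then show "inv\<^bsub>PSL\<^esub> x \<in> PSL_pred P"
    unfolding PSL_pred_def AB(3) inv_PSL[OF AB(1)] by (rule imageI)
  have "mmul p A B \<in> {M \<in> SL2 p. P M}" using AB assms(2) mmul_SL2 by blast
  then show "x \<otimes>\<^bsub>PSL\<^esub> y \<in> PSL_pred P"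
    unfolding PSL_pred_def AB(3,6) mult_PSL[OF AB(1,4)] by (rule imageI)
qed

lemma proj_in_PSL_pred_iff:
  assumes "M \<in> SL2 p" "\<And>A. P A \<Longrightarrow> P (mneg p A)"
  shows "proj M \<in> PSL_pred P \<longleftrightarrow> P M"
proof
  assume "proj M \<in> PSL_pred P"
  then obtain A where "A \<in> SL2 p" "P A" "proj M = proj A" unfolding PSL_pred_def by blast
  then show "P M" using proj_eqD assms(2) by metis
qed (use assms(1) in \<open>auto simp: PSL_pred_def\<close>)

end

fun is_rational :: "mat2 \<Rightarrow> bool" where
  "is_rational ((a1, a2), (b1, b2), (c1, c2), (d1, d2)) \<longleftrightarrow> a2 = 0 \<and> b2 = 0 \<and> c2 = 0 \<and> d2 = 0"

fun is_upper_triangular :: "mat2 \<Rightarrow> bool" where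
  "is_upper_triangular (a, b, c, d) \<longleftrightarrow> c = (0, 0)"

(* The matrices [[a, b sqrt 2], [c sqrt 2, d]] and [[a sqrt 2, b], [c, d sqrt 2]] with a, b, c, d
   in F_p: the image of PGL(2,p) under conjugation by diag(sqrt 2, 1). *)
fun is_twisted_rational :: "mat2 \<Rightarrow> bool" where
  "is_twisted_rational ((a1, a2), (b1, b2), (c1, c2), (d1, d2)) \<longleftrightarrow>
     (a2 = 0 \<and> d2 = 0 \<and> b1 = 0 \<and> c1 = 0) \<or> (a1 = 0 \<and> d1 = 0 \<and> b2 = 0 \<and> c2 = 0)"

lemma is_rational_mneg: "is_rational M \<Longrightarrow> is_rational (mneg p M)"
  by (cases M) (auto simp: mneg.simps)

lemma is_upper_triangular_mneg: "is_upper_triangular M \<Longrightarrow> is_upper_triangular (mneg p M)"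
  by (cases M) (auto simp: mneg.simps)

lemma is_twisted_rational_mneg: "is_twisted_rational M \<Longrightarrow> is_twisted_rational (mneg p M)"
  by (cases M) (auto simp: mneg.simps)

context sqrt2_residues
begin

lemma subgroup_rational: "subgroup (PSL_pred is_rational) PSL"
  by (rule subgroup_PSL_pred) (auto simp: mid_def mmul.simps elim!: is_rational.elims)

lemma subgroup_upper_triangular: "subgroup (PSL_pred is_upper_triangular) PSL"
  by (rule subgroup_PSL_pred) (auto simp: mid_def mmul.simps elim!: is_upper_triangular.elims)

lemma subgroup_twisted_rational: "subgroup (PSL_pred is_twisted_rational) PSL"
  by (rule subgroup_PSL_pred) (auto simp: mid_def mmul.simps elim!: is_twisted_rational.elims)

end

section \<open>Generation by two unipotents and the Weyl element\<close>

definition upper :: "fe \<Rightarrow> mat2" where "upper t = ((1, 0), t, (0, 0), (1, 0))"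
definition lower :: "fe \<Rightarrow> mat2" where "lower t = ((1, 0), (0, 0), t, (1, 0))"
definition weyl :: "int \<Rightarrow> mat2" where "weyl p = ((0, 0), (1, 0), (p - 1, 0), (0, 0))"

context sqrt2_residues
begin

lemma upper_eq: "upper t = (\<one>\<^bsub>E\<^esub>, t, \<zero>\<^bsub>E\<^esub>, \<one>\<^bsub>E\<^esub>)"
  by (simp add: upper_def sqrt2_ring_simps)

lemma lower_eq: "lower t = (\<one>\<^bsub>E\<^esub>, \<zero>\<^bsub>E\<^esub>, t, \<one>\<^bsub>E\<^esub>)"
  by (simp add: lower_def sqrt2_ring_simps)

lemma upper_SL2: "t \<in> carrier E \<Longrightarrow> upper t \<in> SL2 p"
  by (simp add: upper_eq SL2_iff E.minus_eq)

lemma lower_SL2: "t \<in> carrier E \<Longrightarrow> lower t \<in> SL2 p"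
  by (simp add: lower_eq SL2_iff E.minus_eq)

lemma mmul_upper: "mmul p (upper (a, b)) (upper (c, d)) = upper ((a + c) mod p, (b + d) mod p)"
  using p_gt_2 by (simp add: upper_def mmul.simps mod_simps add.commute)

lemma basis_in_carrier: "((1::int), (0::int)) \<in> carrier E" "((0::int), (1::int)) \<in> carrier E"
  using p_gt_2 by (auto simp: sqrt2_ring_simps fel_def)

lemma weyl_eq: "weyl p = (\<zero>\<^bsub>E\<^esub>, \<one>\<^bsub>E\<^esub>, \<ominus>\<^bsub>E\<^esub> \<one>\<^bsub>E\<^esub>, \<zero>\<^bsub>E\<^esub>)"
proof -
  have "(p - 1, 0) = fneg p (1, 0)" using p_gt_2 by (simp add: zmod_zminus1_eq_if)
  also have "\<dots> = \<ominus>\<^bsub>E\<^esub> \<one>\<^bsub>E\<^esub>"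
    using fneg_eq_minus[OF basis_in_carrier(1)] by (simp add: sqrt2_ring_simps)
  finally show ?thesis by (simp add: weyl_def sqrt2_ring_simps)
qed

lemma weyl_SL2: "weyl p \<in> SL2 p"
  by (simp add: weyl_eq SL2_iff E.minus_eq E.l_minus E.r_minus)

lemma weyl_conj_upper:
  assumes "t \<in> carrier E"
  shows "mmul p (mmul p (weyl p) (upper t)) (madj (weyl p)) = lower (\<ominus>\<^bsub>E\<^esub> t)"
  using assms by (simp only: weyl_eq madj_eq E.one_closed E.a_inv_closed upper_eq lower_eq mmul_eq
      prod.inject) (safe; algebra)

lemma mmul_upper_lower_upper:
  assumes "x \<in> carrier E" "c \<in> carrier E" "y \<in> carrier E"
  shows "mmul p (mmul p (upper x) (lower c)) (upper y) =
    (\<one>\<^bsub>E\<^esub> \<oplus>\<^bsub>E\<^esub> x \<otimes>\<^bsub>E\<^esub> c, x \<oplus>\<^bsub>E\<^esub> (\<one>\<^bsub>E\<^esub> \<oplus>\<^bsub>E\<^esub> x \<otimes>\<^bsub>E\<^esub> c) \<otimes>\<^bsub>E\<^esub> y, c, c \<otimes>\<^bsub>E\<^esub> y \<oplus>\<^bsub>E\<^esub> \<one>\<^bsub>E\<^esub>)"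
  using assms by (simp only: upper_eq lower_eq mmul_eq prod.inject) (safe; algebra?; simp)

end

locale sqrt2_field = sqrt2_residues +
  assumes prime: "Factorial_Ring.prime p" and two_not_square: "\<not> QuadRes p 2"
begin

(* (a + b sqrt 2)^-1 = (a - b sqrt 2) / (a^2 - 2 b^2), where the norm a^2 - 2 b^2 is a unit mod p
   because 2 is not a square. *)
lemma exists_inverse:
  assumes "x \<in> carrier E" "x \<noteq> \<zero>\<^bsub>E\<^esub>"
  shows "\<exists>y\<in>carrier E. x \<otimes>\<^bsub>E\<^esub> y = \<one>\<^bsub>E\<^esub>"
proof -
  obtain a b where ab: "x = (a, b)" "0 \<le> a" "a < p" "0 \<le> b" "b < p"
    using assms(1) by (cases x) (auto simp: sqrt2_ring_simps fel_def)
  have "\<not> (p dvd a \<and> p dvd b)"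
    using assms(2) ab by (auto simp: sqrt2_ring_simps dest: zdvd_imp_le)
  then have "\<not> p dvd a * a - 2 * b * b" by (rule norm_sqrt2_not_dvd[OF prime two_not_square])
  then have "coprime (a * a - 2 * b * b) p"
    using prime_imp_coprime[OF prime] coprime_commute by blast
  then obtain n where n: "[(a * a - 2 * b * b) * n = 1] (mod p)"
    using cong_solve_coprime_int by blast
  define y where "y = ((a * n) mod p, (- (b * n)) mod p)"
  have "fmul p x y = fmul p (a, b) (a * n, - (b * n))"
    unfolding y_def ab(1) by (rule fmul_mod_right)
  also have "\<dots> = (((a * a - 2 * b * b) * n) mod p, 0)"
    by (simp add: algebra_simps)
  also have "\<dots> = \<one>\<^bsub>E\<^esub>" using n p_gt_2 by (simp add: cong_def sqrt2_ring_simps)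
  finally show ?thesis using p_gt_2 by (intro bexI[of _ y]) (simp_all add: y_def sqrt2_ring_simps fel_def)
qed

abbreviation H where "H \<equiv> generate PSL {proj (upper (1, 0)), proj (upper (0, 1)), proj (weyl p)}"

lemma proj_mmul_in_H:
  "A \<in> SL2 p \<Longrightarrow> B \<in> SL2 p \<Longrightarrow> proj A \<in> H \<Longrightarrow> proj B \<in> H \<Longrightarrow> proj (mmul p A B) \<in> H"
  by (metis mult_PSL generate.eng)

lemma proj_upper_in_H:
  assumes "t \<in> carrier E"
  shows "proj (upper t) \<in> H"
proof -
  have integers: "proj (upper (int m mod p, 0)) \<in> H" for m
  proof (induction m)
    case 0
    have "upper (0, 0) = mid" by (simp add: upper_def mid_def)
    then show ?case using generate.one[of PSL] by (simp add: one_PSL)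
  next
    case (Suc m)
    have "upper (int (Suc m) mod p, 0) = mmul p (upper (int m mod p, 0)) (upper (1, 0))"
      by (simp add: mmul_upper mod_simps add.commute)
    moreover have "upper (int m mod p, 0) \<in> SL2 p"
      using p_gt_2 by (intro upper_SL2) (simp add: sqrt2_ring_simps fel_def)
    ultimately show ?case
      using Suc proj_mmul_in_H upper_SL2 basis_in_carrier generate.incl[of _ _ PSL] by simp
  qed
  have pairs: "proj (upper (a, int n mod p)) \<in> H" if a: "0 \<le> a" "a < p" for a n
  proof (induction n)
    case 0
    then show ?case using integers[of "nat a"] a by simp
  next
    case (Suc n)
    have "upper (a, int (Suc n) mod p) = mmul p (upper (a, int n mod p)) (upper (0, 1))"
      using a by (simp add: mmul_upper mod_simps add.commute)
    moreover have "upper (a, int n mod p) \<in> SL2 p"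
      using p_gt_2 a by (intro upper_SL2) (simp add: sqrt2_ring_simps fel_def)
    ultimately show ?case
      using Suc proj_mmul_in_H upper_SL2 basis_in_carrier generate.incl[of _ _ PSL] by simp
  qed
  obtain a b where "t = (a, b)" "0 \<le> a" "a < p" "0 \<le> b" "b < p"
    using assms by (cases t) (auto simp: sqrt2_ring_simps fel_def)
  then show ?thesis using pairs[of a "nat b"] by simp
qed

lemma proj_lower_in_H:
  assumes "t \<in> carrier E"
  shows "proj (lower t) \<in> H"
proof -
  have "lower t = mmul p (mmul p (weyl p) (upper (\<ominus>\<^bsub>E\<^esub> t))) (madj (weyl p))"
    using weyl_conj_upper[of "\<ominus>\<^bsub>E\<^esub> t"] assms by simp
  moreover have "proj (weyl p) \<in> H" by (simp add: generate.incl)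
  moreover have "proj (madj (weyl p)) \<in> H"
    using generate.inv[of "proj (weyl p)" _ PSL] by (simp add: inv_PSL weyl_SL2)
  moreover have "proj (upper (\<ominus>\<^bsub>E\<^esub> t)) \<in> H" using assms by (simp add: proj_upper_in_H)
  ultimately show ?thesis
    using assms proj_mmul_in_H weyl_SL2 upper_SL2 madj_SL2 mmul_SL2 by (metis E.a_inv_closed)
qed


lemma proj_in_H_if_lower_left_nonzero:
  assumes M: "(a, b, c, d) \<in> SL2 p" and c: "c \<noteq> \<zero>\<^bsub>E\<^esub>"
  shows "proj (a, b, c, d) \<in> H"
proof -
  have abcd: "a \<in> carrier E" "b \<in> carrier E" "c \<in> carrier E" "d \<in> carrier E"
    and det: "a \<otimes>\<^bsub>E\<^esub> d \<ominus>\<^bsub>E\<^esub> b \<otimes>\<^bsub>E\<^esub> c = \<one>\<^bsub>E\<^esub>"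
    using M unfolding SL2_iff by auto
  obtain c' where c': "c' \<in> carrier E" "c \<otimes>\<^bsub>E\<^esub> c' = \<one>\<^bsub>E\<^esub>"
    using exists_inverse[OF abcd(3) c] by blast
  define x where "x = (a \<ominus>\<^bsub>E\<^esub> \<one>\<^bsub>E\<^esub>) \<otimes>\<^bsub>E\<^esub> c'"
  define y where "y = (d \<ominus>\<^bsub>E\<^esub> \<one>\<^bsub>E\<^esub>) \<otimes>\<^bsub>E\<^esub> c'"
  have xy: "x \<in> carrier E" "y \<in> carrier E" using abcd c' by (simp_all add: x_def y_def)
  have "\<one>\<^bsub>E\<^esub> \<oplus>\<^bsub>E\<^esub> x \<otimes>\<^bsub>E\<^esub> c = \<one>\<^bsub>E\<^esub> \<oplus>\<^bsub>E\<^esub> (a \<ominus>\<^bsub>E\<^esub> \<one>\<^bsub>E\<^esub>) \<otimes>\<^bsub>E\<^esub> (c \<otimes>\<^bsub>E\<^esub> c')"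
    unfolding x_def using abcd c'(1) by algebra
  also have "\<dots> = \<one>\<^bsub>E\<^esub> \<oplus>\<^bsub>E\<^esub> (a \<ominus>\<^bsub>E\<^esub> \<one>\<^bsub>E\<^esub>)" unfolding c'(2) using abcd by simp
  also have "\<dots> = a" using abcd by algebra
  finally have a: "\<one>\<^bsub>E\<^esub> \<oplus>\<^bsub>E\<^esub> x \<otimes>\<^bsub>E\<^esub> c = a" .
  have "c \<otimes>\<^bsub>E\<^esub> y \<oplus>\<^bsub>E\<^esub> \<one>\<^bsub>E\<^esub> = (d \<ominus>\<^bsub>E\<^esub> \<one>\<^bsub>E\<^esub>) \<otimes>\<^bsub>E\<^esub> (c \<otimes>\<^bsub>E\<^esub> c') \<oplus>\<^bsub>E\<^esub> \<one>\<^bsub>E\<^esub>"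
    unfolding y_def using abcd c'(1) by algebra
  also have "\<dots> = (d \<ominus>\<^bsub>E\<^esub> \<one>\<^bsub>E\<^esub>) \<oplus>\<^bsub>E\<^esub> \<one>\<^bsub>E\<^esub>" unfolding c'(2) using abcd by simp
  also have "\<dots> = d" using abcd by algebra
  finally have d: "c \<otimes>\<^bsub>E\<^esub> y \<oplus>\<^bsub>E\<^esub> \<one>\<^bsub>E\<^esub> = d" .
  have "x \<oplus>\<^bsub>E\<^esub> a \<otimes>\<^bsub>E\<^esub> y =
      (a \<otimes>\<^bsub>E\<^esub> d \<ominus>\<^bsub>E\<^esub> b \<otimes>\<^bsub>E\<^esub> c \<ominus>\<^bsub>E\<^esub> \<one>\<^bsub>E\<^esub>) \<otimes>\<^bsub>E\<^esub> c' \<oplus>\<^bsub>E\<^esub> b \<otimes>\<^bsub>E\<^esub> (c \<otimes>\<^bsub>E\<^esub> c')"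
    unfolding x_def y_def using abcd c'(1) E.r_one by algebra
  also have "\<dots> = b" unfolding det c'(2) using abcd c'(1) by (simp add: E.minus_eq E.r_neg)
  finally have b: "x \<oplus>\<^bsub>E\<^esub> a \<otimes>\<^bsub>E\<^esub> y = b" .
  have "(a, b, c, d) = mmul p (mmul p (upper x) (lower c)) (upper y)"
    using mmul_upper_lower_upper[OF xy(1) abcd(3) xy(2)] a b d by simp
  then show ?thesis
    using proj_mmul_in_H proj_upper_in_H proj_lower_in_H upper_SL2 lower_SL2 mmul_SL2 xy abcd(3)
    by metis
qed

lemma proj_in_H:
  assumes M: "M \<in> SL2 p"
  shows "proj M \<in> H"
  using M
proof (rule SL2E)
  fix a b c d assume Md: "M = (a, b, c, d)" "a \<in> carrier E" "b \<in> carrier E" "c \<in> carrier E"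
    "d \<in> carrier E" "a \<otimes>\<^bsub>E\<^esub> d \<ominus>\<^bsub>E\<^esub> b \<otimes>\<^bsub>E\<^esub> c = \<one>\<^bsub>E\<^esub>"
  show ?thesis
  proof (cases "c = \<zero>\<^bsub>E\<^esub>")
    case False
    then show ?thesis using proj_in_H_if_lower_left_nonzero M Md(1) by simp
  next
    case True
    have "a \<noteq> \<zero>\<^bsub>E\<^esub>"
    proof
      assume "a = \<zero>\<^bsub>E\<^esub>"
      then have "a \<otimes>\<^bsub>E\<^esub> d \<ominus>\<^bsub>E\<^esub> b \<otimes>\<^bsub>E\<^esub> c = \<zero>\<^bsub>E\<^esub>" using True Md(2-5) by (simp add: E.minus_eq)
      then show False using Md(6) by (simp add: sqrt2_ring_simps)
    qed
    define M' where "M' = mmul p (lower \<one>\<^bsub>E\<^esub>) M"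
    have M': "M' \<in> SL2 p" unfolding M'_def using mmul_SL2 lower_SL2 M by simp
    moreover have "M' = (a, b, a, b \<oplus>\<^bsub>E\<^esub> d)"
      unfolding M'_def Md(1) lower_eq mmul_eq using Md(2-5) True by simp
    ultimately have "proj M' \<in> H"
      using proj_in_H_if_lower_left_nonzero \<open>a \<noteq> \<zero>\<^bsub>E\<^esub>\<close> by simp
    moreover have "mmul p (lower (\<ominus>\<^bsub>E\<^esub> \<one>\<^bsub>E\<^esub>)) (lower \<one>\<^bsub>E\<^esub>) = mid"
      by (simp only: lower_eq mid_eq mmul_eq prod.inject) (safe; algebra)
    then have "M = mmul p (lower (\<ominus>\<^bsub>E\<^esub> \<one>\<^bsub>E\<^esub>)) M'"
      unfolding M'_def using mmul_assoc[OF lower_SL2[OF E.a_inv_closed[OF E.one_closed]] lower_SL2[OF E.one_closed] M] M by (simp add: mmul_mid_left)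
    ultimately show ?thesis
      using proj_mmul_in_H proj_lower_in_H lower_SL2 M' by (metis E.one_closed E.a_inv_closed)
  qed
qed

lemma generate_upper_weyl: "H = carrier PSL"
proof
  show "H \<subseteq> carrier PSL"
    by (rule PSL.generate_incl) (auto simp: carrier_PSL basis_in_carrier intro!: upper_SL2 weyl_SL2)
  show "carrier PSL \<subseteq> H" using proj_in_H by (auto simp: carrier_PSL)
qed

end

(* (p + 1) div 2 is the inverse of 2 modulo an odd p. *)
definition diag_two :: "int \<Rightarrow> mat2" where
  "diag_two p = ((2, 0), (0, 0), (0, 0), ((p + 1) div 2, 0))"

context sqrt2_field
begin

lemma diag_two_SL2: "diag_two p \<in> SL2 p"
proof -
  have "odd p" using prime_odd_int[OF prime p_gt_2] .
  then have "2 * ((p + 1) div 2) = p + 1" by presburger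
  then show ?thesis using p_gt_2 by (simp add: diag_two_def SL2_def fel_def mod_simps)
qed

lemma proj_diag_two_ne_one:
  assumes "p > 3"
  shows "proj (diag_two p) \<noteq> \<one>\<^bsub>PSL\<^esub>"
proof
  assume "proj (diag_two p) = \<one>\<^bsub>PSL\<^esub>"
  then have "diag_two p = mid \<or> diag_two p = mneg p mid"
    unfolding one_PSL by (rule proj_eqD)
  moreover have "mneg p mid = ((p - 1, 0), (0, 0), (0, 0), (p - 1, 0))"
    using p_gt_2 by (simp add: mid_def mneg.simps zmod_zminus1_eq_if)
  ultimately show False using assms by (auto simp: diag_two_def mid_def)
qed

end

theorem theorem2p1:
  fixes p :: int
  assumes "Factorial_Ring.prime p" and "p \<ge> 7" and "p mod 8 = 3 \<or> p mod 8 = 5"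
    and "max_irr_len (PSL2_sq p) = 3"
  shows "\<not> replacement_property (PSL2_sq p)"
proof -
  interpret sqrt2_field "residue_ring p" p
    by unfold_locales (use assms two_not_QuadRes in auto)
  have SL2: "upper (1, 0) \<in> SL2 p" "upper (0, 1) \<in> SL2 p" "weyl p \<in> SL2 p" "diag_two p \<in> SL2 p"
    using upper_SL2 basis_in_carrier weyl_SL2 diag_two_SL2 by auto
  have mem: "proj M \<in> PSL_pred is_rational \<longleftrightarrow> is_rational M"
    "proj M \<in> PSL_pred is_upper_triangular \<longleftrightarrow> is_upper_triangular M"
    "proj M \<in> PSL_pred is_twisted_rational \<longleftrightarrow> is_twisted_rational M"
    if "M \<in> SL2 p" for M
    using proj_in_PSL_pred_iff[OF that] is_rational_mneg is_upper_triangular_mneg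
      is_twisted_rational_mneg by auto
  show ?thesis
  proof (rule PSL.separated_gen_seq_fails_replacement
      [where s = "[proj (upper (1, 0)), proj (upper (0, 1)), proj (weyl p)]"
        and K = "\<lambda>i. [PSL_pred is_twisted_rational, PSL_pred is_rational,
                       PSL_pred is_upper_triangular] ! i"
        and g = "proj (diag_two p)"])
    show "generate PSL (set [proj (upper (1, 0)), proj (upper (0, 1)), proj (weyl p)]) = carrier PSL"
      using generate_upper_weyl by simp
    show "proj (diag_two p) \<noteq> \<one>\<^bsub>PSL\<^esub>" using proj_diag_two_ne_one assms(2) by simp
  qed (use SL2 assms(2,4) in \<open>auto simp: carrier_PSL mem upper_def weyl_def diag_two_def
         less_Suc_eq numeral_3_eq_3 subgroup_rational subgroup_upper_triangular
         subgroup_twisted_rational\<close>)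
qed

end
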